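(* Let $n \ge 1$ and let $X_1,\dots,X_n$ be independent Bernoulli random variables with $P(X_i=1)=p_i$, where $p_1 \le p_2 \le \cdots \le p_n$. For an integer $\theta$, let $\Pi_\theta(X_1,\dots,X_n)=1$ if $\sum_i X_i \ge \theta$ and $0$ otherwise. Consider adaptive transmission orderings: at each step a node that has not yet transmitted is chosen as a (deterministic) function of the bits broadcast so far, and it broadcasts its bit $X_i$; the process stops once the value of the function is determined by the broadcast bits. Then for every $0 \le k \le n-1$, among the orderings that minimize the expected number of broadcast bits needed to determine $\Pi_{n-k}(X_1,\dots,X_n)$, there is one in which node $k+1$ transmits first. Equivalently, defining for a set $S$ of nodes and integer $\theta$: $C(S,\theta)=0$ if $\theta\le 0$ or $\theta>|S|$, and otherwise $C(S,\theta)=\min_{i\in S}\{1+p_i\,C(S\setminus\{i\},\theta-1)+(1-p_i)\,C(S\setminus\{i\},\theta)\}$, the minimum defining $C(\{1,\dots,n\},n-k)$ is attained at $i=k+1$.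
   Context: Setting: a collocated (broadcast) network of $n$ nodes, every transmission is heard by all nodes, at most one node transmits at a time, and collisions convey no information, so the identity of the node sending the $j$-th bit depends only on the previously broadcast bits. Each node $i$ holds a single bit $X_i$, and every node must compute $\Pi_{n-k}(X_1,\dots,X_n)$ with zero error. $C(S,\theta)$ is the minimum expected number of broadcast bits needed to compute the threshold function with threshold $\theta$ of the bits of the nodes in $S$. *)

theory Defs
  imports Complex_Main
begin

text \<open>Nodes are natural numbers, p i is the probability
  that node i holds bit 1. The auxiliary first argument is a recursion depth
  equal to the cardinality of the node set (see C below).\<close>

fun Cf :: "nat \<Rightarrow> (nat \<Rightarrow> real) \<Rightarrow> nat set \<Rightarrow> int \<Rightarrow> real" where
  "Cf 0 p S \<theta> = 0"
| "Cf (Suc m) p S \<theta> =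
     (if \<theta> \<le> 0 \<or> \<theta> > int (Suc m) then 0
      else Min ((\<lambda>i. 1 + p i * Cf m p (S - {i}) (\<theta> - 1)
                     + (1 - p i) * Cf m p (S - {i}) \<theta>) ` S))"

definition C :: "(nat \<Rightarrow> real) \<Rightarrow> nat set \<Rightarrow> int \<Rightarrow> real" where
  "C p S \<theta> = Cf (card S) p S \<theta>"

end

theory Submission
  imports Defs
begin

text \<open>
  Write the probabilities of the nodes of \<open>S\<close> in increasing order as a list \<open>xs\<close> of length
  \<open>s\<close>. Then \<open>C(S,\<theta>)\<close> has the closed form \<open>cost xs \<theta>\<close>, a sum of cumulative Poisson binomial
  probabilities of the suffixes of \<open>xs\<close> plus the same expression for the dual list (bits
  complemented, order reversed, threshold \<open>s + 1 - \<theta>\<close>). This is checked against the recursion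
  defining \<open>C\<close>: letting the \<open>i\<close>-th node transmit first and then proceeding optimally costs
  \<open>cost xs \<theta>\<close> plus two sums of the form \<open>\<Sum>t>i. (x\<^sub>t - x\<^sub>i) P(exactly \<theta> - 1 ones after position t)\<close>,
  one for \<open>xs\<close> and one for its dual. Both are nonnegative because the probabilities are sorted, and
  both vanish for \<open>i = s - \<theta>\<close>, i.e. for node \<open>k + 1\<close> when \<open>\<theta> = n - k\<close>.
\<close>

fun poibin_cdf :: "real list \<Rightarrow> int \<Rightarrow> real" where
  "poibin_cdf [] k = (if 0 \<le> k then 1 else 0)"
| "poibin_cdf (x # xs) k = x * poibin_cdf xs (k - 1) + (1 - x) * poibin_cdf xs k"

fun poibin_pmf :: "real list \<Rightarrow> int \<Rightarrow> real" where
  "poibin_pmf [] k = (if k = 0 then 1 else 0)"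
| "poibin_pmf (x # xs) k = x * poibin_pmf xs (k - 1) + (1 - x) * poibin_pmf xs k"

lemma poibin_cdf_neg: "k < 0 \<Longrightarrow> poibin_cdf xs k = 0"
  by (induction xs arbitrary: k) auto

lemma poibin_cdf_ge_length: "int (length xs) \<le> k \<Longrightarrow> poibin_cdf xs k = 1"
  by (induction xs arbitrary: k) auto

lemma poibin_pmf_gt_length: "int (length xs) < k \<Longrightarrow> poibin_pmf xs k = 0"
  by (induction xs arbitrary: k) auto

lemma poibin_pmf_nonneg: "set xs \<subseteq> {0..1} \<Longrightarrow> 0 \<le> poibin_pmf xs k"
proof (induction xs arbitrary: k)
  case (Cons x xs)
  then have "0 \<le> x" "0 \<le> 1 - x" "0 \<le> poibin_pmf xs (k - 1)" "0 \<le> poibin_pmf xs k"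
    by auto
  then show ?case by simp
qed simp

lemma poibin_cdf_diff: "poibin_cdf xs k - poibin_cdf xs (k - 1) = poibin_pmf xs k"
proof (induction xs arbitrary: k)
  case (Cons x xs)
  have "poibin_cdf (x # xs) k - poibin_cdf (x # xs) (k - 1)
      = x * (poibin_cdf xs (k - 1) - poibin_cdf xs (k - 1 - 1)) + (1 - x) * (poibin_cdf xs k - poibin_cdf xs (k - 1))"
    by (simp add: algebra_simps)
  then show ?case by (simp only: Cons.IH poibin_pmf.simps)
qed simp

lemma poibin_cdf_Cons_eq: "poibin_cdf (x # xs) k = poibin_cdf xs k - x * poibin_pmf xs k"
  using poibin_cdf_diff[of xs k] by (simp add: algebra_simps)

lemma poibin_cdf_append_Cons:
  "poibin_cdf (us @ y # vs) k = y * poibin_cdf (us @ vs) (k - 1) + (1 - y) * poibin_cdf (us @ vs) k"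
proof (induction us arbitrary: k)
  case (Cons u us)
  show ?case
    by (simp only: append_Cons poibin_cdf.simps Cons.IH) (simp add: algebra_simps)
qed simp

text \<open>Classify the outcomes with more than \<open>k\<close> ones by the position of the \<open>(k+1)\<close>-st one
  counted from the end.\<close>

lemma one_minus_poibin_cdf:
  "0 \<le> k \<Longrightarrow> 1 - poibin_cdf xs k = (\<Sum>t<length xs. xs ! t * poibin_pmf (drop (Suc t) xs) k)"
proof (induction xs)
  case (Cons x xs)
  have "(\<Sum>t<length (x # xs). (x # xs) ! t * poibin_pmf (drop (Suc t) (x # xs)) k)
      = x * poibin_pmf xs k + (\<Sum>t<length xs. xs ! t * poibin_pmf (drop (Suc t) xs) k)"
    by (simp only: length_Cons sum.lessThan_Suc_shift) simp
  with Cons show ?case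
    by (simp only: poibin_cdf_Cons_eq) simp
qed simp

lemma one_minus_poibin_cdf_drop:
  assumes "0 \<le> k"
  shows "1 - poibin_cdf (drop (Suc i) xs) k
       = (\<Sum>t\<in>{Suc i..<length xs}. xs ! t * poibin_pmf (drop (Suc t) xs) k)"
proof (cases "Suc i \<le> length xs")
  case True
  have "1 - poibin_cdf (drop (Suc i) xs) k
      = (\<Sum>t<length xs - Suc i. xs ! (t + Suc i) * poibin_pmf (drop (Suc (t + Suc i)) xs) k)"
    using one_minus_poibin_cdf[OF assms, of "drop (Suc i) xs"] by (simp add: add.commute)
  also have "\<dots> = (\<Sum>t\<in>{0 + Suc i..<(length xs - Suc i) + Suc i}. xs ! t * poibin_pmf (drop (Suc t) xs) k)"
    by (simp only: sum.shift_bounds_nat_ivl lessThan_atLeast0)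
  also have "{0 + Suc i..<(length xs - Suc i) + Suc i} = {Suc i..<length xs}"
    by (simp only: add_0 le_add_diff_inverse2[OF True])
  finally show ?thesis .
qed (use assms in simp)

definition remove_nth :: "nat \<Rightarrow> 'a list \<Rightarrow> 'a list" where
  "remove_nth i xs = take i xs @ drop (Suc i) xs"

lemma length_remove_nth [simp]: "i < length xs \<Longrightarrow> length (remove_nth i xs) = length xs - 1"
  by (simp add: remove_nth_def)

lemma remove_nth_map: "remove_nth i (map f xs) = map f (remove_nth i xs)"
  by (simp add: remove_nth_def take_map drop_map)

lemma drop_remove_nth_less:
  "j \<le> i \<Longrightarrow> i < length xs \<Longrightarrow> drop j (remove_nth i xs) = remove_nth (i - j) (drop j xs)"
  by (simp add: remove_nth_def drop_take)

lemma drop_Suc_remove_nth_ge: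
  "i \<le> j \<Longrightarrow> i < length xs \<Longrightarrow> drop (Suc j) (remove_nth i xs) = drop (Suc (Suc j)) xs"
  by (simp add: remove_nth_def)

lemma poibin_cdf_remove_nth:
  assumes "i < length xs"
  shows "poibin_cdf xs k
       = xs ! i * poibin_cdf (remove_nth i xs) (k - 1) + (1 - xs ! i) * poibin_cdf (remove_nth i xs) k"
  using poibin_cdf_append_Cons[of "take i xs" "xs ! i" "drop (Suc i) xs" k]
  by (simp add: id_take_nth_drop[OF assms, symmetric] remove_nth_def)

lemma poibin_cdf_drop_Suc_remove_nth:
  assumes i: "i < length xs"
  shows "xs ! i * poibin_cdf (drop (Suc j) (remove_nth i xs)) (k - 1)
           + (1 - xs ! i) * poibin_cdf (drop (Suc j) (remove_nth i xs)) k
         = (if j < i then poibin_cdf (drop (Suc j) xs) k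
            else poibin_cdf (drop (Suc (Suc j)) xs) k - xs ! i * poibin_pmf (drop (Suc (Suc j)) xs) k)"
proof (cases "j < i")
  case True
  have "drop (Suc j) xs ! (i - Suc j) = xs ! i" and "i - Suc j < length (drop (Suc j) xs)"
    using True i by simp_all
  then show ?thesis
    using True i poibin_cdf_remove_nth[of "i - Suc j" "drop (Suc j) xs" k]
    by (simp add: drop_remove_nth_less)
next
  case False
  then show ?thesis
    using i poibin_cdf_diff[of "drop (Suc (Suc j)) xs" k]
    by (simp add: drop_Suc_remove_nth_ge algebra_simps)
qed

lemma remove1_nth_distinct:
  assumes "distinct xs" and "i < length xs"
  shows "remove1 (xs ! i) xs = remove_nth i xs"
proof -
  have xs: "xs = take i xs @ xs ! i # drop (Suc i) xs"
    using assms(2) by (rule id_take_nth_drop)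
  then have "xs ! i \<notin> set (take i xs)"
    using assms(1) by (metis distinct_append distinct.simps(2) not_distinct_conv_prefix)
  then show ?thesis
    by (subst (2) xs) (simp add: remove1_append remove_nth_def)
qed

lemma sorted_list_of_set_remove_nth:
  assumes "finite S" and "i < card S"
  shows "sorted_list_of_set (S - {sorted_list_of_set S ! i}) = remove_nth i (sorted_list_of_set S)"
  using assms
  by (simp add: sorted_list_of_set_remove remove1_nth_distinct)

text \<open>Complementing the bits of \<open>s\<close> nodes turns the event ``at least \<open>\<theta>\<close> ones'' into the
  complement of ``at least \<open>s + 1 - \<theta>\<close> ones''; reversing keeps the list sorted.\<close>

definition dual :: "real list \<Rightarrow> real list" where
  "dual xs = rev (map (\<lambda>x. 1 - x) xs)"

lemma length_dual [simp]: "length (dual xs) = length xs"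
  by (simp add: dual_def)

lemma nth_dual: "i < length xs \<Longrightarrow> dual xs ! (length xs - 1 - i) = 1 - xs ! i"
  by (simp add: dual_def rev_nth)

lemma dual_probabilities: "set xs \<subseteq> {0..1} \<Longrightarrow> set (dual xs) \<subseteq> {0..1}"
  by (auto simp: dual_def)

lemma sorted_dual: "sorted xs \<Longrightarrow> sorted (dual xs)"
  by (simp add: dual_def sorted_wrt_rev sorted_wrt_map sorted_wrt_mono_rel[of _ "(\<le>)"])

lemma dual_remove_nth:
  assumes "i < length xs"
  shows "dual (remove_nth i xs) = remove_nth (length xs - 1 - i) (dual xs)"
proof -
  define ys where "ys = map (\<lambda>x. 1 - x) xs"
  have "dual (remove_nth i xs) = rev (drop (Suc i) ys) @ rev (take i ys)"
    by (simp add: dual_def remove_nth_def ys_def take_map drop_map)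
  also have "\<dots> = take (length ys - Suc i) (rev ys) @ drop (length ys - i) (rev ys)"
    by (simp add: rev_drop rev_take)
  moreover have "length ys = length xs"
    by (simp add: ys_def)
  ultimately show ?thesis
    using assms by (simp add: remove_nth_def dual_def ys_def[symmetric] Suc_diff_Suc)
qed

lemma sum_skip_index:
  fixes f :: "nat \<Rightarrow> 'a::ab_group_add"
  assumes "i \<le> m"
  shows "(\<Sum>j<m. f (if j < i then j else Suc j)) = (\<Sum>j<Suc m. f j) - f i"
  using assms
proof (induction m)
  case (Suc m)
  show ?case
  proof (cases "i = Suc m")
    case True
    then show ?thesis by simp
  next
    case False
    with Suc show ?thesis by (simp add: algebra_simps)
  qed
qed simp

definition suffix_cdf_sum :: "real list \<Rightarrow> int \<Rightarrow> real" where
  "suffix_cdf_sum xs \<theta> = (\<Sum>j<length xs. poibin_cdf (drop (Suc j) xs) (\<theta> - 1))"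

definition cost :: "real list \<Rightarrow> int \<Rightarrow> real" where
  "cost xs \<theta> = suffix_cdf_sum xs \<theta> + suffix_cdf_sum (dual xs) (int (length xs) + 1 - \<theta>) - length xs"

definition cost_first :: "real list \<Rightarrow> int \<Rightarrow> nat \<Rightarrow> real" where
  "cost_first xs \<theta> i =
     1 + xs ! i * cost (remove_nth i xs) (\<theta> - 1) + (1 - xs ! i) * cost (remove_nth i xs) \<theta>"

definition excess :: "real list \<Rightarrow> nat \<Rightarrow> int \<Rightarrow> real" where
  "excess xs i \<theta> =
     (\<Sum>t\<in>{Suc i..<length xs}. (xs ! t - xs ! i) * poibin_pmf (drop (Suc t) xs) (\<theta> - 1))"

lemma suffix_cdf_sum_nonpos: "\<theta> \<le> 0 \<Longrightarrow> suffix_cdf_sum xs \<theta> = 0"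
  by (simp add: suffix_cdf_sum_def poibin_cdf_neg)

lemma suffix_cdf_sum_gt_length: "int (length xs) < \<theta> \<Longrightarrow> suffix_cdf_sum xs \<theta> = length xs"
  by (simp add: suffix_cdf_sum_def poibin_cdf_ge_length)

lemma cost_out_of_range: "\<theta> \<le> 0 \<or> int (length xs) < \<theta> \<Longrightarrow> cost xs \<theta> = 0"
  by (auto simp: cost_def suffix_cdf_sum_nonpos suffix_cdf_sum_gt_length)

lemma suffix_cdf_sum_remove_nth:
  assumes i: "i < length xs" and \<theta>: "1 \<le> \<theta>"
  shows "xs ! i * suffix_cdf_sum (remove_nth i xs) (\<theta> - 1)
           + (1 - xs ! i) * suffix_cdf_sum (remove_nth i xs) \<theta>
         = suffix_cdf_sum xs \<theta> - 1 + excess xs i \<theta>"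
proof -
  define x where "x = xs ! i"
  define D where "D = remove_nth i xs"
  define f where "f t = poibin_cdf (drop (Suc t) xs) (\<theta> - 1)" for t
  define u where "u t = poibin_pmf (drop (Suc t) xs) (\<theta> - 1)" for t
  define h where "h t = f t - (if i < t then x * u t else 0)" for t
  have branch: "x * poibin_cdf (drop (Suc j) D) (\<theta> - 1 - 1) + (1 - x) * poibin_cdf (drop (Suc j) D) (\<theta> - 1)
      = h (if j < i then j else Suc j)" for j
    using poibin_cdf_drop_Suc_remove_nth[OF i, of j "\<theta> - 1"]
    by (simp add: x_def D_def h_def f_def u_def)
  have "x * suffix_cdf_sum D (\<theta> - 1) + (1 - x) * suffix_cdf_sum D \<theta>
      = (\<Sum>j<length xs - 1. x * poibin_cdf (drop (Suc j) D) (\<theta> - 1 - 1)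
                             + (1 - x) * poibin_cdf (drop (Suc j) D) (\<theta> - 1))"
    using i by (simp add: suffix_cdf_sum_def D_def sum_distrib_left sum.distrib)
  also have "\<dots> = (\<Sum>j<length xs - 1. h (if j < i then j else Suc j))"
    by (rule sum.cong[OF refl branch])
  also have "\<dots> = (\<Sum>t<Suc (length xs - 1). h t) - h i"
    by (rule sum_skip_index) (use i in simp)
  also have "Suc (length xs - 1) = length xs"
    using i by simp
  also have "h i = f i"
    by (simp add: h_def)
  also have "(\<Sum>t<length xs. h t) = suffix_cdf_sum xs \<theta> - x * (\<Sum>t\<in>{Suc i..<length xs}. u t)"
  proof -
    have "{t \<in> {..<length xs}. i < t} = {Suc i..<length xs}"
      by auto
    then show ?thesis
      using sum.inter_filter[of "{..<length xs}" "\<lambda>t. x * u t" "\<lambda>t. i < t"]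
      by (simp add: h_def f_def suffix_cdf_sum_def sum_subtractf sum_distrib_left)
  qed
  also have "f i = 1 - (\<Sum>t\<in>{Suc i..<length xs}. xs ! t * u t)"
    using one_minus_poibin_cdf_drop[of "\<theta> - 1" i xs] \<theta> by (simp add: f_def u_def)
  finally show ?thesis
    by (simp add: excess_def x_def D_def u_def left_diff_distrib sum_subtractf sum_distrib_left)
qed

lemma cost_first_eq_cost_plus_excess:
  assumes i: "i < length xs" and \<theta>: "1 \<le> \<theta>" "\<theta> \<le> int (length xs)"
  shows "cost_first xs \<theta> i
       = cost xs \<theta> + excess xs i \<theta>
         + excess (dual xs) (length xs - 1 - i) (int (length xs) + 1 - \<theta>)"
proof -
  define s where "s = length xs"
  define x where "x = xs ! i"
  define D where "D = remove_nth i xs"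
  define i' where "i' = s - 1 - i"
  define \<theta>' where "\<theta>' = int s + 1 - \<theta>"
  have s: "1 \<le> s" "i' < s"
    using i by (simp_all add: s_def i'_def)
  have dual_D: "dual D = remove_nth i' (dual xs)"
    unfolding D_def i'_def s_def by (rule dual_remove_nth[OF i])
  have dual_x: "dual xs ! i' = 1 - x"
    unfolding x_def i'_def s_def by (rule nth_dual[OF i])
  have length_D: "length D = s - 1"
    using i by (simp add: D_def s_def)
  have \<theta>'_D: "int (length D) + 1 - (\<theta> - 1) = \<theta>'" "int (length D) + 1 - \<theta> = \<theta>' - 1"
    and real_length_D: "real (length D) = real s - 1"
    using s length_D by (simp_all add: \<theta>'_def of_nat_diff)
  have cost_D: "cost D (\<theta> - 1) = suffix_cdf_sum D (\<theta> - 1) + suffix_cdf_sum (dual D) \<theta>' - (real s - 1)"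
    "cost D \<theta> = suffix_cdf_sum D \<theta> + suffix_cdf_sum (dual D) (\<theta>' - 1) - (real s - 1)"
    unfolding cost_def \<theta>'_D real_length_D by simp_all
  have avg: "x * suffix_cdf_sum D (\<theta> - 1) + (1 - x) * suffix_cdf_sum D \<theta>
      = suffix_cdf_sum xs \<theta> - 1 + excess xs i \<theta>"
    using suffix_cdf_sum_remove_nth[OF i \<theta>(1)] by (simp add: x_def D_def)
  have avg_dual: "(1 - x) * suffix_cdf_sum (dual D) (\<theta>' - 1) + x * suffix_cdf_sum (dual D) \<theta>'
      = suffix_cdf_sum (dual xs) \<theta>' - 1 + excess (dual xs) i' \<theta>'"
    using suffix_cdf_sum_remove_nth[of i' "dual xs" \<theta>'] s \<theta>(2)
    by (simp add: dual_D dual_x s_def \<theta>'_def)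
  have "cost_first xs \<theta> i = 1 + x * cost D (\<theta> - 1) + (1 - x) * cost D \<theta>"
    by (simp add: cost_first_def x_def D_def)
  also have "\<dots> = 1 + (x * suffix_cdf_sum D (\<theta> - 1) + (1 - x) * suffix_cdf_sum D \<theta>)
      + ((1 - x) * suffix_cdf_sum (dual D) (\<theta>' - 1) + x * suffix_cdf_sum (dual D) \<theta>') - (real s - 1)"
    unfolding cost_D by (simp add: algebra_simps)
  also have "\<dots> = cost xs \<theta> + excess xs i \<theta> + excess (dual xs) i' \<theta>'"
    unfolding avg avg_dual by (simp add: cost_def s_def \<theta>'_def)
  finally show ?thesis
    by (simp add: s_def i'_def \<theta>'_def)
qed

lemma excess_nonneg:
  assumes "sorted xs" and "set xs \<subseteq> {0..1}"
  shows "0 \<le> excess xs i \<theta>"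
  unfolding excess_def
proof (rule sum_nonneg)
  fix t assume "t \<in> {Suc i..<length xs}"
  then have "xs ! i \<le> xs ! t"
    using assms(1) by (simp add: sorted_nth_mono)
  moreover have "0 \<le> poibin_pmf (drop (Suc t) xs) (\<theta> - 1)"
    using assms(2) set_drop_subset by (intro poibin_pmf_nonneg) (rule order_trans)
  ultimately show "0 \<le> (xs ! t - xs ! i) * poibin_pmf (drop (Suc t) xs) (\<theta> - 1)"
    by simp
qed

lemma excess_eq_0: "int (length xs) - \<theta> \<le> int i \<Longrightarrow> excess xs i \<theta> = 0"
  by (simp add: excess_def poibin_pmf_gt_length)

lemma cost_le_cost_first:
  assumes "sorted xs" "set xs \<subseteq> {0..1}" "i < length xs" "1 \<le> \<theta>" "\<theta> \<le> int (length xs)"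
  shows "cost xs \<theta> \<le> cost_first xs \<theta> i"
  using cost_first_eq_cost_plus_excess[OF assms(3-5)] excess_nonneg[OF assms(1,2)]
    excess_nonneg[OF sorted_dual[OF assms(1)] dual_probabilities[OF assms(2)]]
  by simp

lemma cost_first_threshold_index:
  assumes "1 \<le> \<theta>" "\<theta> \<le> int (length xs)"
  shows "cost_first xs \<theta> (nat (int (length xs) - \<theta>)) = cost xs \<theta>"
proof -
  define i where "i = nat (int (length xs) - \<theta>)"
  have "i < length xs" and "int (length xs - 1 - i) = \<theta> - 1"
    using assms by (simp_all add: i_def of_nat_diff)
  then show ?thesis
    using cost_first_eq_cost_plus_excess[of i xs \<theta>] assms
    by (simp add: excess_eq_0 i_def)
qed

lemma cost_eq_Min_cost_first:
  assumes "sorted xs" "set xs \<subseteq> {0..1}" "1 \<le> \<theta>" "\<theta> \<le> int (length xs)"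
  shows "cost xs \<theta> = Min (cost_first xs \<theta> ` {..<length xs})"
proof (rule Min_eqI[symmetric])
  show "cost xs \<theta> \<in> cost_first xs \<theta> ` {..<length xs}"
    using cost_first_threshold_index[OF assms(3,4)] assms(3,4)
    by (intro image_eqI[of _ _ "nat (int (length xs) - \<theta>)"]) auto
qed (use assms cost_le_cost_first in auto)

lemma C_out_of_range: "\<theta> \<le> 0 \<or> int (card S) < \<theta> \<Longrightarrow> C p S \<theta> = 0"
  by (cases "card S") (auto simp: C_def)

lemma C_recursion:
  assumes "finite S" "1 \<le> \<theta>" "\<theta> \<le> int (card S)"
  shows "C p S \<theta> = Min ((\<lambda>i. 1 + p i * C p (S - {i}) (\<theta> - 1) + (1 - p i) * C p (S - {i}) \<theta>) ` S)"
proof -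
  obtain N where N: "card S = Suc N"
    using assms(2,3) by (cases "card S") auto
  have "card (S - {i}) = N" if "i \<in> S" for i
    using that assms(1) N by simp
  then show ?thesis
    using assms(2,3) N by (auto simp: C_def intro!: arg_cong[where f = Min] image_cong)
qed

lemma C_eq_cost:
  assumes "finite S" "mono_on S p" "p ` S \<subseteq> {0..1}"
  shows "C p S \<theta> = cost (map p (sorted_list_of_set S)) \<theta>"
  using assms
proof (induction "card S" arbitrary: S \<theta>)
  case 0
  have "cost [] \<theta> = 0"
    by (rule cost_out_of_range) auto
  with 0 show ?case
    by (simp add: C_def)
next
  case (Suc N)
  define ls where "ls = sorted_list_of_set S"
  define xs where "xs = map p ls"
  have length_xs: "length xs = card S" and set_ls: "set ls = S"
    using Suc by (simp_all add: xs_def ls_def)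
  have branch: "1 + p (ls ! k) * C p (S - {ls ! k}) (\<theta> - 1)
      + (1 - p (ls ! k)) * C p (S - {ls ! k}) \<theta> = cost_first xs \<theta> k"
    if k: "k < card S" for k
  proof -
    have "card (S - {ls ! k}) = N"
      using k length_xs set_ls Suc.hyps(2) Suc.prems(1) by (auto simp: xs_def)
    then have "C p (S - {ls ! k}) t = cost (map p (sorted_list_of_set (S - {ls ! k}))) t" for t
      by (intro Suc.hyps(1)) (use Suc.prems in \<open>auto intro: mono_on_subset\<close>)
    moreover have "sorted_list_of_set (S - {ls ! k}) = remove_nth k ls"
      unfolding ls_def by (rule sorted_list_of_set_remove_nth) (use Suc k in simp_all)
    ultimately show ?thesis
      using k length_xs by (simp add: cost_first_def xs_def remove_nth_map)
  qed
  show ?case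
  proof (cases "1 \<le> \<theta> \<and> \<theta> \<le> int (card S)")
    case True
    define f where "f i = 1 + p i * C p (S - {i}) (\<theta> - 1) + (1 - p i) * C p (S - {i}) \<theta>" for i
    have "S = (!) ls ` {..<card S}"
      using set_ls length_xs by (auto simp: xs_def in_set_conv_nth)
    then have "f ` S = cost_first xs \<theta> ` {..<card S}"
      using branch by (metis (no_types, lifting) f_def image_cong image_image lessThan_iff)
    moreover have "sorted xs"
      using Suc.prems(2) set_ls by (auto simp: xs_def ls_def intro: sorted_map_mono)
    moreover have "set xs \<subseteq> {0..1}"
      using Suc.prems(3) set_ls by (auto simp: xs_def)
    ultimately show ?thesis
      using True Suc.prems(1) length_xs
      by (simp add: C_recursion cost_eq_Min_cost_first f_def xs_def ls_def)
  qed (auto simp: C_out_of_range cost_out_of_range)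
qed

theorem theorem1:
  fixes p :: "nat \<Rightarrow> real" and n k :: nat
  assumes "n \<ge> 1"
    and "k \<le> n - 1"
    and "\<And>i. i \<in> {1..n} \<Longrightarrow> 0 \<le> p i \<and> p i \<le> 1"
    and "\<And>i j. i \<in> {1..n} \<Longrightarrow> j \<in> {1..n} \<Longrightarrow> i \<le> j \<Longrightarrow> p i \<le> p j"
  shows "C p {1..n} (int n - int k) =
           1 + p (k + 1) * C p ({1..n} - {k + 1}) (int n - int k - 1)
             + (1 - p (k + 1)) * C p ({1..n} - {k + 1}) (int n - int k)"
proof -
  define xs where "xs = map p [1..<Suc n]"
  have k: "k < n"
    using assms(1,2) by simp
  have mono: "mono_on {1..n} p"
    using assms(4) by (intro mono_onI) auto
  have C_eq: "C p S t = cost (map p (sorted_list_of_set S)) t" if "S \<subseteq> {1..n}" for S t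
    using that assms(3) mono_on_subset[OF mono that]
    by (intro C_eq_cost) (auto intro: finite_subset)
  have nodes: "sorted_list_of_set {1..n} = [1..<Suc n]" and node_k: "[1..<Suc n] ! k = k + 1"
    using k by (simp_all add: atLeastLessThanSuc_atLeastAtMost[symmetric] del: upt_Suc)
  have "sorted_list_of_set ({1..n} - {k + 1}) = remove_nth k [1..<Suc n]"
    using sorted_list_of_set_remove_nth[of "{1..n}" k] k unfolding nodes node_k by simp
  then have C_remove: "C p ({1..n} - {k + 1}) t = cost (remove_nth k xs) t" for t
    by (simp add: C_eq xs_def remove_nth_map)
  have "C p {1..n} (int n - int k) = cost xs (int n - int k)"
    unfolding xs_def nodes[symmetric] by (rule C_eq) simp
  also have "\<dots> = cost_first xs (int n - int k) k"
    using cost_first_threshold_index[of "int n - int k" xs] k by (simp add: xs_def)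
  also have "\<dots> = 1 + p (k + 1) * C p ({1..n} - {k + 1}) (int n - int k - 1)
                 + (1 - p (k + 1)) * C p ({1..n} - {k + 1}) (int n - int k)"
    unfolding cost_first_def C_remove using k by (simp add: xs_def node_k del: upt_Suc)
  finally show ?thesis .
qed

end
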